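(* For every integer $n\ge 4$, $\chi_{ei}(C_5\square C_n)=5$.
   Context: All graphs are finite and simple. $C_k$ denotes the cycle on $k$ vertices. A path $P_4$ in $G$ is a sequence $uxyv$ of four distinct vertices with $ux,xy,yv\in E(G)$; $u,v$ are its end vertices. An $e$-injective $k$-coloring of $G$ is a function $f:V(G)\to\{1,\dots,k\}$ with $f(u)\ne f(v)$ whenever $u,v$ are the end vertices of some path $P_4$ in $G$; $\chi_{ei}(G)$ is the least such $k$. In the Cartesian product $G\square H$ two vertices are adjacent if they are adjacent in one coordinate and equal in the other. *)

theory Defs
  imports Main
begin

text \<open>A graph is given by a vertex set V and a symmetric irreflexive adjacency relation E.\<close>

definition cycle_verts :: "nat \<Rightarrow> nat set" where
  "cycle_verts k = {0..<k}"

definition cycle_adj :: "nat \<Rightarrow> nat \<Rightarrow> nat \<Rightarrow> bool" where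
  "cycle_adj k u v \<longleftrightarrow> u < k \<and> v < k \<and> u \<noteq> v \<and> ((u + 1) mod k = v \<or> (v + 1) mod k = u)"

definition box_adj :: "('a \<Rightarrow> 'a \<Rightarrow> bool) \<Rightarrow> ('b \<Rightarrow> 'b \<Rightarrow> bool) \<Rightarrow> 'a \<times> 'b \<Rightarrow> 'a \<times> 'b \<Rightarrow> bool" where
  "box_adj E1 E2 p q \<longleftrightarrow> (E1 (fst p) (fst q) \<and> snd p = snd q) \<or> (fst p = fst q \<and> E2 (snd p) (snd q))"

definition P4_ends :: "'a set \<Rightarrow> ('a \<Rightarrow> 'a \<Rightarrow> bool) \<Rightarrow> 'a \<Rightarrow> 'a \<Rightarrow> bool" where
  "P4_ends V E u v \<longleftrightarrow> (\<exists>x y. u \<in> V \<and> x \<in> V \<and> y \<in> V \<and> v \<in> V \<and> distinct [u, x, y, v]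
      \<and> E u x \<and> E x y \<and> E y v)"

definition e_injective_coloring :: "'a set \<Rightarrow> ('a \<Rightarrow> 'a \<Rightarrow> bool) \<Rightarrow> nat \<Rightarrow> ('a \<Rightarrow> nat) \<Rightarrow> bool" where
  "e_injective_coloring V E k f \<longleftrightarrow> f ` V \<subseteq> {1..k} \<and>
     (\<forall>u v. P4_ends V E u v \<longrightarrow> f u \<noteq> f v)"

definition chi_ei :: "'a set \<Rightarrow> ('a \<Rightarrow> 'a \<Rightarrow> bool) \<Rightarrow> nat" where
  "chi_ei V E = (LEAST k. \<exists>f. e_injective_coloring V E k f)"

end

theory Submission
  imports Defs
begin

(* Upper bound: call h a labeling of a graph if every edge changes h by +1 or -1 modulo 5.
   The ends of a P4 then differ by a sum of three such steps, i.e. by +-1 or +-3, never by 0,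
   so h mod 5 is an e-injective 5-colouring.  Labelings of two factors add up to one of their
   Cartesian product; C5 is labelled by the identity, and Cn (n >= 4) by going down from 0 to
   -m and then up again, where m is chosen with n = 2m (mod 5) so that closing the cycle is
   again a step of +1.
   Lower bound: inside a C5-fibre, adjacent vertices are the ends of a P4 through a
   neighbouring fibre, and vertices at distance two are the ends of the P4 running the other
   way round the 5-cycle; so the five vertices of a fibre get five different colours. *)

definition pm_one_labeling :: "nat \<Rightarrow> ('a \<Rightarrow> 'a \<Rightarrow> bool) \<Rightarrow> ('a \<Rightarrow> int) \<Rightarrow> bool" where
  "pm_one_labeling k E h \<longleftrightarrow>
     (\<forall>u v. E u v \<longrightarrow> int k dvd h v - h u - 1 \<or> int k dvd h v - h u + 1)"

lemma pm_one_labeling_P4_ends: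
  assumes "pm_one_labeling k E h" "P4_ends V E u v" "k \<noteq> 1" "k \<noteq> 3"
  shows "\<not> int k dvd h v - h u"
proof
  assume dvd_uv: "int k dvd h v - h u"
  obtain x y where "E u x" "E x y" "E y v"
    using assms(2) unfolding P4_ends_def by blast
  then obtain e1 e2 e3 :: int
    where e: "e1 \<in> {1, -1}" "e2 \<in> {1, -1}" "e3 \<in> {1, -1}"
      and steps: "int k dvd h x - h u - e1" "int k dvd h y - h x - e2" "int k dvd h v - h y - e3"
    using assms(1) unfolding pm_one_labeling_def
    by (metis diff_minus_eq_add insert_iff)
  have "(h v - h u) - (e1 + e2 + e3) = (h x - h u - e1) + (h y - h x - e2) + (h v - h y - e3)"
    by (simp add: add.assoc)
  then have "int k dvd (h v - h u) - (e1 + e2 + e3)"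
    using steps by (metis dvd_add)
  from dvd_diff[OF dvd_uv this] have "int k dvd e1 + e2 + e3"
    by (simp add: add.assoc)
  moreover have "e1 + e2 + e3 \<in> {1, -1, 3, -3}" using e by auto
  ultimately have "int k dvd 1 \<or> int k dvd 3" by auto
  then have "k dvd 3"
    using int_dvd_int_iff[of k 1] int_dvd_int_iff[of k 3] by auto
  moreover have "k \<le> 3" using \<open>k dvd 3\<close> by (simp add: dvd_imp_le)
  ultimately have "k = 0 \<or> k = 2" using assms(3,4) by arith
  then show False using \<open>k dvd 3\<close> by auto
qed

lemma e_injective_coloring_pm_one_labeling:
  assumes "pm_one_labeling k E h" "k > 1" "k \<noteq> 3"
  shows "e_injective_coloring V E k (\<lambda>v. nat (h v mod int k) + 1)"
  unfolding e_injective_coloring_def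
proof (intro conjI allI impI)
  have "nat (h v mod int k) < k" for v
    using assms(2) by (simp add: nat_less_iff)
  then show "(\<lambda>v. nat (h v mod int k) + 1) ` V \<subseteq> {1..k}"
    by (auto simp: Suc_le_eq)
next
  fix u v
  assume "P4_ends V E u v"
  then have "\<not> int k dvd h v - h u"
    using pm_one_labeling_P4_ends assms by (metis less_irrefl_nat)
  then have "h v mod int k \<noteq> h u mod int k"
    by (simp add: mod_eq_dvd_iff)
  then show "nat (h u mod int k) + 1 \<noteq> nat (h v mod int k) + 1"
    using assms(2) by (simp add: nat_eq_iff)
qed

lemma pm_one_labeling_box_adj:
  assumes "pm_one_labeling k E1 h1" "pm_one_labeling k E2 h2"
  shows "pm_one_labeling k (box_adj E1 E2) (\<lambda>(a, b). h1 a + h2 b)"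
  using assms unfolding pm_one_labeling_def box_adj_def
  by (auto simp: algebra_simps)

lemma pm_one_labeling_cycle_adj:
  assumes "m \<le> n" "int k dvd int n - 2 * int m"
  shows "pm_one_labeling k (cycle_adj n) (\<lambda>b. int b - 2 * int (min b m))"
proof -
  define h where "h b = int b - 2 * int (min b m)" for b
  have k_dvd: "int k dvd 2 * int m - int n"
    using assms(2) by (metis dvd_minus_iff minus_diff_eq)
  have step: "int k dvd h v - h u - 1 \<or> int k dvd h v - h u + 1"
    if "u < n" "(u + 1) mod n = v" for u v
  proof (cases "u + 1 = n")
    case wrap: True
    then have "v = 0" using that by simp
    show ?thesis
    proof (cases "m = n")
      case True
      then have "h v - h u + 1 = 2 * int m - int n"
        using wrap \<open>v = 0\<close> by (simp add: h_def)
      then show ?thesis using k_dvd by simp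
    next
      case False
      then have "h v - h u - 1 = 2 * int m - int n"
        using wrap \<open>v = 0\<close> assms(1) by (simp add: h_def)
      then show ?thesis using k_dvd by simp
    qed
  next
    case False
    then have "v = u + 1" using that by simp
    then have "h v - h u = (if u < m then -1 else 1)" by (simp add: h_def)
    then show ?thesis by auto
  qed
  show ?thesis
    unfolding pm_one_labeling_def h_def[symmetric]
  proof (intro allI impI)
    fix u v
    assume "cycle_adj n u v"
    then consider "u < n" "(u + 1) mod n = v" | "v < n" "(v + 1) mod n = u"
      unfolding cycle_adj_def by blast
    then show "int k dvd h v - h u - 1 \<or> int k dvd h v - h u + 1"
    proof cases
      case 1
      then show ?thesis by (rule step)
    next
      case 2
      then have "int k dvd h u - h v - 1 \<or> int k dvd h u - h v + 1" by (rule step)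
      then show ?thesis by (metis dvd_minus_iff minus_diff_eq diff_minus_eq_add add.commute)
    qed
  qed
qed

lemma P4_ends_sym:
  assumes "symp E" "P4_ends V E u v"
  shows "P4_ends V E v u"
  using assms unfolding P4_ends_def by (auto dest: sympD)

lemma P4_ends_box_adj_layer:
  assumes "P4_ends V1 E1 a a'" "b \<in> V2"
  shows "P4_ends (V1 \<times> V2) (box_adj E1 E2) (a, b) (a', b)"
proof -
  obtain x y where "a \<in> V1" "x \<in> V1" "y \<in> V1" "a' \<in> V1" "distinct [a, x, y, a']"
    "E1 a x" "E1 x y" "E1 y a'"
    using assms(1) unfolding P4_ends_def by blast
  then show ?thesis
    using assms(2) unfolding P4_ends_def box_adj_def
    by (intro exI[of _ "(x, b)"] exI[of _ "(y, b)"]) auto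
qed

lemma P4_ends_box_adj_across:
  assumes "symp E2" "E1 a a'" "a \<noteq> a'" "a \<in> V1" "a' \<in> V1"
    and "E2 b b'" "b \<noteq> b'" "b \<in> V2" "b' \<in> V2"
  shows "P4_ends (V1 \<times> V2) (box_adj E1 E2) (a, b) (a', b)"
  using assms unfolding P4_ends_def box_adj_def
  by (intro exI[of _ "(a, b')"] exI[of _ "(a', b')"]) (auto dest: sympD)

lemma symp_cycle_adj: "symp (cycle_adj n)"
  by (auto intro: sympI simp: cycle_adj_def)

lemma P4_ends_cycle_adj_plus_3:
  assumes "4 \<le> k" "i < k"
  shows "P4_ends (cycle_verts k) (cycle_adj k) i ((i + 3) mod k)"
proof -
  let ?p = "\<lambda>j. (i + j) mod k"
  have p_neq: "?p a \<noteq> ?p b" if "a < b" "b < k" for a b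
  proof
    assume "?p a = ?p b"
    then have "k dvd (i + b) - (i + a)"
      using mod_eq_dvd_iff_nat[of "i + a" "i + b" k] that(1) by simp
    then show False using that by (auto dest: dvd_imp_le)
  qed
  have adj: "cycle_adj k (?p j) (?p (j + 1))" if "j + 1 < k" for j
    using p_neq[of j "j + 1"] that assms(1) by (simp add: cycle_adj_def mod_Suc_eq)
  have path: "cycle_adj k (?p 0) (?p 1)" "cycle_adj k (?p 1) (?p 2)" "cycle_adj k (?p 2) (?p 3)"
    using adj[of 0] adj[of 1] adj[of 2] assms(1) by simp_all
  have distinct: "distinct [?p 0, ?p 1, ?p 2, ?p 3]"
    using assms(1) p_neq[of 0 1] p_neq[of 0 2] p_neq[of 0 3]
      p_neq[of 1 2] p_neq[of 1 3] p_neq[of 2 3]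
    by auto
  have verts: "?p j \<in> cycle_verts k" for j
    using assms(1) by (simp add: cycle_verts_def)
  have "P4_ends (cycle_verts k) (cycle_adj k) (?p 0) (?p 3)"
    unfolding P4_ends_def
    by (intro exI[of _ "?p 1"] exI[of _ "?p 2"] conjI verts distinct path)
  then show ?thesis
    using assms(2) by simp
qed

lemma P4_ends_C5_box_same_layer:
  assumes "symp E2" "E2 b b'" "b \<noteq> b'" "b \<in> V2" "b' \<in> V2"
    and "i < 5" "i' < 5" "i \<noteq> i'"
  shows "P4_ends (cycle_verts 5 \<times> V2) (box_adj (cycle_adj 5) E2) (i, b) (i', b)"
proof -
  have verts: "i \<in> cycle_verts 5" "i' \<in> cycle_verts 5"
    using assms(6,7) by (simp_all add: cycle_verts_def)
  have "i = 0 \<or> i = 1 \<or> i = 2 \<or> i = 3 \<or> i = 4" "i' = 0 \<or> i' = 1 \<or> i' = 2 \<or> i' = 3 \<or> i' = 4"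
    using assms(6,7) by auto
  then consider "cycle_adj 5 i i'" | "i' = (i + 3) mod 5" | "i = (i' + 3) mod 5"
    using assms(8) unfolding cycle_adj_def by (elim disjE) simp_all
  then show ?thesis
  proof cases
    case 1
    show ?thesis
      by (rule P4_ends_box_adj_across[of E2 "cycle_adj 5" i i', OF assms(1) 1 assms(8) verts assms(2-5)])
  next
    case 2
    show ?thesis
      using P4_ends_box_adj_layer[OF P4_ends_cycle_adj_plus_3[of 5 i] assms(4)] assms(6) 2
      by simp
  next
    case 3
    show ?thesis
      using P4_ends_box_adj_layer[OF P4_ends_sym[OF symp_cycle_adj P4_ends_cycle_adj_plus_3[of 5 i']]
          assms(4)] assms(7) 3
      by simp
  qed
qed

lemma e_injective_coloring_C5_box_ge_5:
  assumes "symp E2" "E2 b b'" "b \<noteq> b'" "b \<in> V2" "b' \<in> V2"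
    and "e_injective_coloring (cycle_verts 5 \<times> V2) (box_adj (cycle_adj 5) E2) k f"
  shows "5 \<le> k"
proof -
  let ?layer = "(\<lambda>i. (i, b)) ` {..<5::nat}"
  have "inj_on f ?layer"
    using assms(6) P4_ends_C5_box_same_layer[OF assms(1-5)]
    unfolding e_injective_coloring_def inj_on_def by blast
  then have "card (f ` ?layer) = 5"
    by (simp add: card_image inj_on_def)
  moreover have "f ` ?layer \<subseteq> {1..k}"
    using assms(4,6) unfolding e_injective_coloring_def cycle_verts_def by auto
  ultimately show ?thesis
    by (metis card_atLeastAtMost card_mono finite_atLeastAtMost diff_Suc_1)
qed

lemma e_injective_5_coloring_C5_box_Cn:
  assumes "4 \<le> n"
  obtains f where
    "e_injective_coloring (cycle_verts 5 \<times> cycle_verts n) (box_adj (cycle_adj 5) (cycle_adj n)) 5 f"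
proof -
  define m where "m = 3 * n mod 5"
  \<comment> \<open>so that 2m = 6n = n (mod 5); and m \<le> n, as m < 5 unless n = 4, where m = 2\<close>
  have "m \<le> n"
    using assms unfolding m_def by (cases "n = 4") auto
  have "3 * n = 5 * (3 * n div 5) + m"
    unfolding m_def by simp
  then have "3 * int n = 5 * int (3 * n div 5) + int m"
    by (metis of_nat_add of_nat_mult of_nat_numeral)
  then have "int n - 2 * int m = 5 * (2 * int (3 * n div 5)) - 5 * int n"
    by linarith
  then have "int 5 dvd int n - 2 * int m"
    by (metis dvd_diff dvd_triv_left of_nat_numeral)
  then have "pm_one_labeling 5 (cycle_adj n) (\<lambda>b. int b - 2 * int (min b m))"
    using \<open>m \<le> n\<close> by (rule pm_one_labeling_cycle_adj[rotated])
  moreover have "pm_one_labeling 5 (cycle_adj 5) int"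
    using pm_one_labeling_cycle_adj[of 0 5 5] by simp
  ultimately have "pm_one_labeling 5 (box_adj (cycle_adj 5) (cycle_adj n))
      (\<lambda>(a, b). int a + (int b - 2 * int (min b m)))"
    by (intro pm_one_labeling_box_adj)
  from e_injective_coloring_pm_one_labeling[OF this] show ?thesis
    by (rule that) simp_all
qed

theorem theorem4p8:
  fixes n :: nat
  assumes "n \<ge> 4"
  shows "chi_ei (cycle_verts 5 \<times> cycle_verts n) (box_adj (cycle_adj 5) (cycle_adj n)) = 5"
proof -
  have edge: "cycle_adj n 0 1" "0 \<in> cycle_verts n" "1 \<in> cycle_verts n"
    using assms by (simp_all add: cycle_adj_def cycle_verts_def)
  obtain f where "e_injective_coloring (cycle_verts 5 \<times> cycle_verts n)
      (box_adj (cycle_adj 5) (cycle_adj n)) 5 f"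
    using e_injective_5_coloring_C5_box_Cn[OF assms] .
  moreover have "5 \<le> k" if "e_injective_coloring (cycle_verts 5 \<times> cycle_verts n)
      (box_adj (cycle_adj 5) (cycle_adj n)) k g" for k g
    using e_injective_coloring_C5_box_ge_5[OF symp_cycle_adj edge(1) zero_neq_one edge(2,3) that] .
  ultimately show ?thesis
    unfolding chi_ei_def by (intro Least_equality) blast+
qed

end
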